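(* Let $g,h>\tfrac12$, let $M_{\mathrm{I}},M_{\mathrm{II}}\in\mathbb{Z}_{\ge0}$, $M=M_{\mathrm{I}}+M_{\mathrm{II}}$, let $\mathcal{D}=((d_1,t_1),\ldots,(d_M,t_M))$ be an ordered list of pairwise distinct seed labels as described in the context, containing exactly $M_{\mathrm{I}}$ labels of Type I and $M_{\mathrm{II}}$ labels of Type II, and let $n\in\mathbb{Z}_{\ge0}$. For $N\in\{M,M+1\}$, $j=1,\ldots,N$ and $-1<\eta<1$ define $$X^{(N)}_{(\mathrm{v},\mathrm{I}),j}(\eta)=\frac{(-1)^{j-1}}{2^{j-1}}\big(h-\tfrac12-\mathrm{v}\big)_{j-1}\Big(\frac{1+\eta}{2}\Big)^{N-j}P^{(g+j-\frac32,\,\frac32-h-j)}_{\mathrm{v}}(\eta),$$ $$X^{(N)}_{(\mathrm{v},\mathrm{II}),j}(\eta)=\frac{1}{2^{j-1}}\big(g-\tfrac12-\mathrm{v}\big)_{j-1}\Big(\frac{1-\eta}{2}\Big)^{N-j}P^{(\frac32-g-j,\,h+j-\frac32)}_{\mathrm{v}}(\eta),$$ $$Z^{(N)}_{n,j}(\eta)=\frac{1}{2^{j-1}}(n+g+h)_{j-1}P^{(g+j-\frac32,\,h+j-\frac32)}_{n+1-j}(\eta),$$ and let $\vec X^{(N)}_{(\mathrm{v},t)}$, $\vec Z^{(N)}_n$ denote the corresponding column vectors $(\cdot)_{j=1}^N$. Then for $-1<\eta<1$, with $A(\eta)=\big(\frac{1+\eta}{2}\big)^{-M_{\mathrm{I}}(M_{\mathrm{I}}-1)}\big(\frac{1-\eta}{2}\big)^{-M_{\mathrm{II}}(M_{\mathrm{II}}-1)}$,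 $$\Xi_{\mathcal{D}}(\eta)=A(\eta)\det\big(\vec X^{(M)}_{(d_1,t_1)}(\eta)\ \cdots\ \vec X^{(M)}_{(d_M,t_M)}(\eta)\big),$$ $$P_{\mathcal{D},n}(\eta)=A(\eta)\det\big(\vec X^{(M+1)}_{(d_1,t_1)}(\eta)\ \cdots\ \vec X^{(M+1)}_{(d_M,t_M)}(\eta)\ \vec Z^{(M+1)}_n(\eta)\big).$$
   Context: $(a)_k=a(a+1)\cdots(a+k-1)$, $(a)_0=1$. For real $\alpha,\beta$ and $m\in\mathbb{Z}_{\ge0}$ the Jacobi polynomial is $P^{(\alpha,\beta)}_m(\eta)=\frac{1}{m!}\sum_{k=0}^m\frac{(-m)_k(m+\alpha+\beta+1)_k(\alpha+k+1)_{m-k}}{k!}\big(\frac{1-\eta}{2}\big)^k$ (equal to $\frac{(\alpha+1)_m}{m!}\sum_{k}\frac{(-m)_k(m+\alpha+\beta+1)_k}{k!(\alpha+1)_k}(\frac{1-\eta}{2})^k$ when defined), and $P^{(\alpha,\beta)}_m\equiv0$ for $m<0$. For $a\in\mathbb{R}$, $[a]'$ denotes the greatest integer strictly less than $a$. Fix $g,h>\frac12$. A seed label is a pair $(\mathrm{v},t)$, $t\in\{\mathrm{I},\mathrm{II}\}$, with $\mathrm{v}\in\{0,1,\ldots,[h-\frac12]'\}$ if $t=\mathrm{I}$ and $\mathrm{v}\in\{0,1,\ldots,[g-\frac12]'\}$ if $t=\mathrm{II}$. For $-1<\eta<1$ define $\mu_{(\mathrm{v},\mathrm{I})}(\eta)=\big(\frac{1+\eta}{2}\big)^{\frac12-h}P^{(g-\frac12,\frac12-h)}_{\mathrm{v}}(\eta)$,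 $\mu_{(\mathrm{v},\mathrm{II})}(\eta)=\big(\frac{1-\eta}{2}\big)^{\frac12-g}P^{(\frac12-g,h-\frac12)}_{\mathrm{v}}(\eta)$, and $P_n(\eta)=P^{(g-\frac12,h-\frac12)}_n(\eta)$. The Wronskian with respect to $\eta$ is $\mathrm{W}[f_1,\ldots,f_m](\eta)=\det\big(\frac{d^{j-1}f_k}{d\eta^{j-1}}\big)_{1\le j,k\le m}$. For an ordered list $\mathcal{D}=((d_1,t_1),\ldots,(d_M,t_M))$ of seed labels with $M_{\mathrm{I}}$ of Type I and $M_{\mathrm{II}}$ of Type II, the denominator polynomial and multi-indexed Jacobi polynomials are $\Xi_{\mathcal{D}}(\eta)=\mathrm{W}[\mu_{(d_1,t_1)},\ldots,\mu_{(d_M,t_M)}](\eta)\big(\frac{1-\eta}{2}\big)^{(M_{\mathrm{I}}+g-\frac12)M_{\mathrm{II}}}\big(\frac{1+\eta}{2}\big)^{(M_{\mathrm{II}}+h-\frac12)M_{\mathrm{I}}}$ and $P_{\mathcal{D},n}(\eta)=\mathrm{W}[\mu_{(d_1,t_1)},\ldots,\mu_{(d_M,t_M)},P_n](\eta)\big(\frac{1-\eta}{2}\big)^{(M_{\mathrm{I}}+g+\frac12)M_{\mathrm{II}}}\big(\frac{1+\eta}{2}\big)^{(M_{\mathrm{II}}+h+\frac12)M_{\mathrm{I}}}$. *)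

theory Defs
  imports Complex_Main "HOL-Analysis.Derivative" "Jordan_Normal_Form.Determinant"
begin

datatype seed_type = TypeI | TypeII

definition jacobiP :: "real \<Rightarrow> real \<Rightarrow> int \<Rightarrow> real \<Rightarrow> real" where
  "jacobiP \<alpha> \<beta> m \<eta> =
     (if m < 0 then 0 else
       (let m' = nat m in
        (1 / fact m') * (\<Sum>k = 0..m'.
           pochhammer (- real m') k * pochhammer (real m' + \<alpha> + \<beta> + 1) k
           * pochhammer (\<alpha> + real k + 1) (m' - k) / fact k * ((1 - \<eta>) / 2) ^ k)))"

text \<open>Admissible seed label (v,t): v <= [h-1/2]' for Type I, i.e. v < h - 1/2
  (v is an integer), and v < g - 1/2 for Type II.\<close>
definition seed_label :: "real \<Rightarrow> real \<Rightarrow> nat \<times> seed_type \<Rightarrow> bool" where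
  "seed_label g h l = (case l of
      (v, TypeI) \<Rightarrow> real v < h - 1/2
    | (v, TypeII) \<Rightarrow> real v < g - 1/2)"

definition mu :: "real \<Rightarrow> real \<Rightarrow> nat \<times> seed_type \<Rightarrow> real \<Rightarrow> real" where
  "mu g h l \<eta> = (case l of
      (v, TypeI) \<Rightarrow> ((1 + \<eta>) / 2) powr (1/2 - h) * jacobiP (g - 1/2) (1/2 - h) (int v) \<eta>
    | (v, TypeII) \<Rightarrow> ((1 - \<eta>) / 2) powr (1/2 - g) * jacobiP (1/2 - g) (h - 1/2) (int v) \<eta>)"

definition Pn :: "real \<Rightarrow> real \<Rightarrow> nat \<Rightarrow> real \<Rightarrow> real" where
  "Pn g h n \<eta> = jacobiP (g - 1/2) (h - 1/2) (int n) \<eta>"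

definition wronskian :: "(real \<Rightarrow> real) list \<Rightarrow> real \<Rightarrow> real" where
  "wronskian fs \<eta> = det (mat (length fs) (length fs) (\<lambda>(j, k). (deriv ^^ j) (fs ! k) \<eta>))"

definition numI :: "(nat \<times> seed_type) list \<Rightarrow> nat" where
  "numI D = length (filter (\<lambda>l. snd l = TypeI) D)"

definition numII :: "(nat \<times> seed_type) list \<Rightarrow> nat" where
  "numII D = length (filter (\<lambda>l. snd l = TypeII) D)"

definition Xi :: "real \<Rightarrow> real \<Rightarrow> (nat \<times> seed_type) list \<Rightarrow> real \<Rightarrow> real" where
  "Xi g h D \<eta> = wronskian (map (mu g h) D) \<eta>
     * ((1 - \<eta>) / 2) powr ((real (numI D) + g - 1/2) * real (numII D))
     * ((1 + \<eta>) / 2) powr ((real (numII D) + h - 1/2) * real (numI D))"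

definition PD :: "real \<Rightarrow> real \<Rightarrow> (nat \<times> seed_type) list \<Rightarrow> nat \<Rightarrow> real \<Rightarrow> real" where
  "PD g h D n \<eta> = wronskian (map (mu g h) D @ [Pn g h n]) \<eta>
     * ((1 - \<eta>) / 2) powr ((real (numI D) + g + 1/2) * real (numII D))
     * ((1 + \<eta>) / 2) powr ((real (numII D) + h + 1/2) * real (numI D))"

definition Xent :: "real \<Rightarrow> real \<Rightarrow> nat \<Rightarrow> nat \<times> seed_type \<Rightarrow> nat \<Rightarrow> real \<Rightarrow> real" where
  "Xent g h N l j \<eta> = (case l of
      (v, TypeI) \<Rightarrow> (-1) ^ (j - 1) / 2 ^ (j - 1) * pochhammer (h - 1/2 - real v) (j - 1)
          * ((1 + \<eta>) / 2) ^ (N - j)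
          * jacobiP (g + real j - 3/2) (3/2 - h - real j) (int v) \<eta>
    | (v, TypeII) \<Rightarrow> 1 / 2 ^ (j - 1) * pochhammer (g - 1/2 - real v) (j - 1)
          * ((1 - \<eta>) / 2) ^ (N - j)
          * jacobiP (3/2 - g - real j) (h + real j - 3/2) (int v) \<eta>)"

definition Zent :: "real \<Rightarrow> real \<Rightarrow> nat \<Rightarrow> nat \<Rightarrow> real \<Rightarrow> real" where
  "Zent g h n j \<eta> = 1 / 2 ^ (j - 1) * pochhammer (real n + g + h) (j - 1)
      * jacobiP (g + real j - 3/2) (h + real j - 3/2) (int n + 1 - int j) \<eta>"

end

theory Submission
  imports Defs
begin

text \<open>Write u = (1+x)/2, w = (1-x)/2. A Type I seed function has the form u^b P^(a,b)_v, and
  the contiguous relation b P^(a,b)_v + (1+x) P^(a,b)_v' = (v+b) P^(a+1,b-1)_v says that its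
  derivative is (v+b)/2 u^(b-1) P^(a+1,b-1)_v; symmetrically for w^a P^(a,b)_v (Type II), and
  P^(a,b)_m' = (m+a+b+1)/2 P^(a+1,b+1)_(m-1). Hence every entry of the Wronskian is an explicit
  Pochhammer multiple of a Jacobi polynomial times a power of u or w. Pulling the power
  u^(3/2-h-N) (resp. w^(3/2-g-N)) out of each seed column leaves exactly the entries X^(N), and
  the extracted powers combine with the gauge factors of Xi and P_D,n into A(x).
  The identities hold without g, h > 1/2 and without admissibility or distinctness of the seeds.\<close>

definition jacobi_coeff :: "real \<Rightarrow> real \<Rightarrow> nat \<Rightarrow> nat \<Rightarrow> real" where
  "jacobi_coeff a b m k = pochhammer (- real m) k * pochhammer (real m + a + b + 1) k
     * pochhammer (a + real k + 1) (m - k) / (fact k * fact m)"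

lemma jacobiP_of_nat:
  "jacobiP a b (int m) x = (\<Sum>k=0..m. jacobi_coeff a b m k * ((1 - x)/2)^k)"
  unfolding jacobiP_def jacobi_coeff_def by (simp add: sum_distrib_left field_simps)

lemma jacobi_coeff_eq_0: "m < k \<Longrightarrow> jacobi_coeff a b m k = 0"
  unfolding jacobi_coeff_def by (simp add: pochhammer_eq_0_iff)

definition jacobiP_dw :: "real \<Rightarrow> real \<Rightarrow> nat \<Rightarrow> real \<Rightarrow> real" where
  "jacobiP_dw a b n x = (\<Sum>k=0..n. jacobi_coeff a b n k * (real k * ((1 - x)/2)^(k - 1)))"

lemma has_real_derivative_jacobiP_of_nat:
  "(jacobiP a b (int n) has_real_derivative - jacobiP_dw a b n x / 2) (at x)"
proof -
  have "jacobiP a b (int n) = (\<lambda>x. \<Sum>k=0..n. jacobi_coeff a b n k * ((1 - x)/2)^k)"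
    by (rule ext) (rule jacobiP_of_nat)
  moreover have "((\<lambda>x. \<Sum>k=0..n. jacobi_coeff a b n k * ((1 - x)/2)^k) has_real_derivative
      (\<Sum>k=0..n. jacobi_coeff a b n k * (real k * ((1 - x)/2)^(k - 1) * (- 1/2)))) (at x)"
    by (auto intro!: derivative_eq_intros sum.cong simp: mult_ac)
  moreover have "(\<Sum>k=0..n. jacobi_coeff a b n k * (real k * ((1 - x)/2)^(k - 1) * (- 1/2)))
      = - jacobiP_dw a b n x / 2"
    by (simp add: jacobiP_dw_def sum_distrib_left sum_negf sum_divide_distrib)
  ultimately show ?thesis by simp
qed

lemma mult_jacobiP_dw:
  "(1 - x)/2 * jacobiP_dw a b n x = (\<Sum>k=0..n. real k * jacobi_coeff a b n k * ((1 - x)/2)^k)"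
  unfolding jacobiP_dw_def sum_distrib_left
proof (rule sum.cong[OF refl])
  fix k
  show "(1 - x)/2 * (jacobi_coeff a b n k * (real k * ((1 - x)/2)^(k - 1)))
      = real k * jacobi_coeff a b n k * ((1 - x)/2)^k"
    by (cases k) (simp_all add: mult_ac)
qed

lemma jacobiP_dw_eq_sum:
  "jacobiP_dw a b n x = (\<Sum>k=0..n. real (Suc k) * jacobi_coeff a b n (Suc k) * ((1 - x)/2)^k)"
proof -
  have "jacobiP_dw a b n x
      = (\<Sum>k=0..Suc n. jacobi_coeff a b n k * (real k * ((1 - x)/2)^(k - 1)))"
    by (simp add: jacobiP_dw_def jacobi_coeff_eq_0)
  also have "\<dots> = (\<Sum>k=0..n. real (Suc k) * jacobi_coeff a b n (Suc k) * ((1 - x)/2)^k)"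
    by (subst sum.atLeast0_atMost_Suc_shift) (simp add: mult_ac)
  finally show ?thesis .
qed

lemma jacobi_coeff_Suc_Suc:
  "real (Suc k) * jacobi_coeff a b (Suc m) (Suc k)
     = - (real (Suc m) + a + b + 1) * jacobi_coeff (a+1) (b+1) m k"
proof -
  have p1: "pochhammer (- real (Suc m)) (Suc k) = - real (Suc m) * pochhammer (- real m) k"
    by (simp add: pochhammer_rec)
  have p2: "pochhammer (real (Suc m) + a + b + 1) (Suc k)
      = (real (Suc m) + a + b + 1) * pochhammer (real m + (a+1) + (b+1) + 1) k"
    by (simp add: pochhammer_rec algebra_simps)
  have p3: "pochhammer (a + real (Suc k) + 1) (Suc m - Suc k)
      = pochhammer ((a+1) + real k + 1) (m - k)"
    by (simp add: algebra_simps)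
  have f: "fact (Suc k) * fact (Suc m)
      = (real (Suc k) * real (Suc m)) * (fact k * fact m :: real)"
    by (simp add: fact_Suc algebra_simps)
  show ?thesis unfolding jacobi_coeff_def p1 p2 p3 f
    by (simp add: field_simps del: of_nat_Suc)
qed

lemma jacobiP_dw_Suc:
  "jacobiP_dw a b (Suc m) x = - (real (Suc m) + a + b + 1) * jacobiP (a+1) (b+1) (int m) x"
proof -
  have "jacobiP_dw a b (Suc m) x
      = (\<Sum>k=0..m. real (Suc k) * jacobi_coeff a b (Suc m) (Suc k) * ((1 - x)/2)^k)"
    unfolding jacobiP_dw_eq_sum by (simp add: jacobi_coeff_eq_0)
  also have "\<dots> = (\<Sum>k=0..m. - (real (Suc m) + a + b + 1)
      * jacobi_coeff (a+1) (b+1) m k * ((1 - x)/2)^k)"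
    by (simp only: jacobi_coeff_Suc_Suc)
  also have "\<dots> = - (real (Suc m) + a + b + 1) * jacobiP (a+1) (b+1) (int m) x"
    by (simp add: jacobiP_of_nat sum_distrib_left mult.assoc)
  finally show ?thesis .
qed

lemma has_real_derivative_jacobiP:
  "(jacobiP a b m has_real_derivative
      (real_of_int m + a + b + 1) / 2 * jacobiP (a+1) (b+1) (m - 1) x) (at x)"
proof (cases "m < 1")
  case True
  have "jacobiP a b m = (\<lambda>x. if m = 0 then 1 else 0)"
  proof (cases "m = 0")
    case True
    then show ?thesis
      using jacobiP_of_nat[of a b 0] by (simp add: jacobi_coeff_def fun_eq_iff)
  qed (use True in \<open>simp add: jacobiP_def fun_eq_iff\<close>)
  moreover have "jacobiP (a+1) (b+1) (m - 1) x = 0"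
    using True by (simp add: jacobiP_def)
  ultimately show ?thesis by simp
next
  case False
  define m' where "m' = nat (m - 1)"
  have m: "m = int (Suc m')" using False by (simp add: m'_def)
  show ?thesis
    using has_real_derivative_jacobiP_of_nat[of a b "Suc m'" x]
    by (simp add: m jacobiP_dw_Suc algebra_simps)
qed

lemma jacobi_coeff_contiguous_alpha:
  assumes k: "k \<le> n"
  shows "(a + real k) * jacobi_coeff a b n k = (real n + a) * jacobi_coeff (a - 1) (b + 1) n k"
proof -
  have "(a + real k) * pochhammer (a + real k + 1) (n - k) = pochhammer (a + real k) (Suc (n - k))"
    by (simp add: pochhammer_rec)
  also have "\<dots> = pochhammer (a + real k) (n - k) * (real n + a)"
    using k by (simp add: pochhammer_Suc of_nat_diff)
  finally have e: "(a + real k) * pochhammer (a + real k + 1) (n - k)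
      = (real n + a) * pochhammer (a - 1 + real k + 1) (n - k)"
    by simp
  have e2: "real n + (a - 1) + (b + 1) + 1 = real n + a + b + 1" by simp
  define A where "A = pochhammer (- real n) k * pochhammer (real n + a + b + 1) k"
  define F where "F = fact k * (fact n :: real)"
  have "(a + real k) * jacobi_coeff a b n k
      = A * ((a + real k) * pochhammer (a + real k + 1) (n - k)) / F"
    unfolding jacobi_coeff_def A_def F_def by (simp add: algebra_simps)
  also have "\<dots> = A * ((real n + a) * pochhammer (a - 1 + real k + 1) (n - k)) / F"
    by (simp only: e)
  also have "\<dots> = (real n + a) * jacobi_coeff (a - 1) (b + 1) n k"
    unfolding jacobi_coeff_def A_def F_def e2 by (simp add: algebra_simps)
  finally show ?thesis .
qed

lemma jacobi_coeff_contiguous_beta: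
  assumes k: "k \<le> n"
  shows "(b + real k) * jacobi_coeff a b n k - real (Suc k) * jacobi_coeff a b n (Suc k)
    = (real n + b) * jacobi_coeff (a + 1) (b - 1) n k"
proof (cases "k = n")
  case True
  have z: "jacobi_coeff a b n (Suc n) = 0" by (simp add: jacobi_coeff_eq_0)
  have "real n + (a + 1) + (b - 1) + 1 = real n + a + b + 1" by simp
  then have e: "jacobi_coeff a b n n = jacobi_coeff (a + 1) (b - 1) n n"
    unfolding jacobi_coeff_def by (simp add: add.assoc)
  show ?thesis using True by (simp only: z e) (simp add: algebra_simps)
next
  case False
  then obtain j where nj: "n - k = Suc j" "n - Suc k = j" using k
    by (metis Suc_diff_Suc le_neq_implies_less)
  have kn: "real n - real k = real j + 1" using nj k
    by (metis add.commute of_nat_Suc of_nat_diff)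
  define A where "A = pochhammer (- real n) k * pochhammer (real n + a + b + 1) k"
  define F where "F = fact k * (fact n :: real)"
  define p where "p = pochhammer (a + real k + 2) j"
  have F0: "F \<noteq> 0" unfolding F_def by simp
  have c1: "jacobi_coeff a b n k = A * (a + real k + 1) * p / F"
    unfolding jacobi_coeff_def A_def F_def p_def nj by (simp add: pochhammer_rec algebra_simps)
  have c2: "real (Suc k) * jacobi_coeff a b n (Suc k)
      = A * (real k - real n) * (real n + a + b + 1 + real k) * p / F"
  proof -
    have q1: "pochhammer (- real n) (Suc k) = pochhammer (- real n) k * (real k - real n)"
      by (simp add: pochhammer_Suc)
    have q2: "pochhammer (real n + a + b + 1) (Suc k)
        = pochhammer (real n + a + b + 1) k * (real n + a + b + 1 + real k)"
      by (simp add: pochhammer_Suc)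
    have q3: "pochhammer (a + real (Suc k) + 1) (n - Suc k) = p"
      unfolding nj p_def by (simp add: algebra_simps)
    have q4: "fact (Suc k) * fact n = real (Suc k) * F"
      unfolding F_def by (simp add: fact_Suc del: of_nat_Suc)
    have "real (Suc k) * jacobi_coeff a b n (Suc k)
        = real (Suc k) * (A * (real k - real n) * (real n + a + b + 1 + real k) * p) / (real (Suc k) * F)"
      unfolding jacobi_coeff_def q1 q2 q3 q4 A_def by (simp only: mult_ac times_divide_eq_right)
    also have "\<dots> = A * (real k - real n) * (real n + a + b + 1 + real k) * p / F"
      by (simp del: of_nat_Suc)
    finally show ?thesis .
  qed
  have c3: "jacobi_coeff (a + 1) (b - 1) n k = A * p * (a + real n + 1) / F"
  proof -
    have "pochhammer (a + 1 + real k + 1) (n - k) = p * (a + real n + 1)"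
      unfolding nj p_def pochhammer_Suc using kn by (simp add: algebra_simps)
    moreover have "real n + (a + 1) + (b - 1) + 1 = real n + a + b + 1" by simp
    ultimately show ?thesis unfolding jacobi_coeff_def A_def F_def by (simp add: algebra_simps)
  qed
  have poly: "(b + real k) * (a + real k + 1) - (real k - real n) * (real n + a + b + 1 + real k)
      = (real n + b) * (a + real n + 1)"
    by (simp add: algebra_simps)
  have "(b + real k) * jacobi_coeff a b n k - real (Suc k) * jacobi_coeff a b n (Suc k)
      = A * p / F * ((b + real k) * (a + real k + 1) - (real k - real n) * (real n + a + b + 1 + real k))"
    unfolding c1 c2 using F0 by (simp add: field_simps)
  also have "\<dots> = (real n + b) * jacobi_coeff (a + 1) (b - 1) n k"
    unfolding poly c3 using F0 by (simp add: field_simps)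
  finally show ?thesis .
qed

lemma jacobiP_contiguous_alpha:
  "a * jacobiP a b (int n) x + (1 - x)/2 * jacobiP_dw a b n x
    = (real n + a) * jacobiP (a - 1) (b + 1) (int n) x"
proof -
  have "a * jacobiP a b (int n) x + (1 - x)/2 * jacobiP_dw a b n x
     = (\<Sum>k=0..n. (a + real k) * jacobi_coeff a b n k * ((1 - x)/2)^k)"
    unfolding mult_jacobiP_dw jacobiP_of_nat
    by (simp add: sum_distrib_left sum.distrib[symmetric] algebra_simps)
  also have "\<dots> = (\<Sum>k=0..n. (real n + a) * jacobi_coeff (a - 1) (b + 1) n k * ((1 - x)/2)^k)"
    by (rule sum.cong[OF refl]) (simp add: jacobi_coeff_contiguous_alpha)
  also have "\<dots> = (real n + a) * jacobiP (a - 1) (b + 1) (int n) x"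
    by (simp add: jacobiP_of_nat sum_distrib_left mult.assoc)
  finally show ?thesis .
qed

lemma jacobiP_contiguous_beta:
  "b * jacobiP a b (int n) x - (1 + x)/2 * jacobiP_dw a b n x
    = (real n + b) * jacobiP (a + 1) (b - 1) (int n) x"
proof -
  have "b * jacobiP a b (int n) x - (1 + x)/2 * jacobiP_dw a b n x
     = b * jacobiP a b (int n) x - jacobiP_dw a b n x + (1 - x)/2 * jacobiP_dw a b n x"
    by (simp add: field_simps)
  also have "\<dots> = (\<Sum>k=0..n. ((b + real k) * jacobi_coeff a b n k
      - real (Suc k) * jacobi_coeff a b n (Suc k)) * ((1 - x)/2)^k)"
    unfolding mult_jacobiP_dw unfolding jacobiP_dw_eq_sum jacobiP_of_nat
    by (simp add: sum_distrib_left sum.distrib[symmetric] sum_subtractf[symmetric] algebra_simps)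
  also have "\<dots> = (\<Sum>k=0..n. (real n + b) * jacobi_coeff (a + 1) (b - 1) n k * ((1 - x)/2)^k)"
    by (rule sum.cong[OF refl]) (simp only: atLeastAtMost_iff jacobi_coeff_contiguous_beta)
  also have "\<dots> = (real n + b) * jacobiP (a + 1) (b - 1) (int n) x"
    by (simp add: jacobiP_of_nat sum_distrib_left mult.assoc)
  finally show ?thesis .
qed

lemma has_real_derivative_powr_jacobiP_plus:
  assumes "-1 < x"
  shows "((\<lambda>x. ((1+x)/2) powr b * jacobiP a b (int n) x) has_real_derivative
     (real n + b) / 2 * ((1+x)/2) powr (b - 1) * jacobiP (a+1) (b-1) (int n) x) (at x)"
proof -
  define u where "u = (1 + x)/2"
  have u0: "u > 0" using assms by (simp add: u_def)
  have deriv: "((\<lambda>x. ((1+x)/2) powr b * jacobiP a b (int n) x) has_real_derivative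
     (b * u powr (b - 1) * (1/2)) * jacobiP a b (int n) x + (- jacobiP_dw a b n x / 2) * u powr b) (at x)"
    unfolding u_def using assms
    by (intro DERIV_mult DERIV_fun_powr has_real_derivative_jacobiP_of_nat)
       (auto intro!: derivative_eq_intros)
  have "u powr b = u powr (b - 1) * u"
    using u0 powr_add[of u "b - 1" 1] by simp
  then have "(b * u powr (b - 1) * (1/2)) * jacobiP a b (int n) x + (- jacobiP_dw a b n x / 2) * u powr b
     = u powr (b - 1) / 2 * (b * jacobiP a b (int n) x - u * jacobiP_dw a b n x)"
    by (simp add: field_simps)
  also have "\<dots> = (real n + b) / 2 * u powr (b - 1) * jacobiP (a+1) (b-1) (int n) x"
    unfolding u_def jacobiP_contiguous_beta by simp
  finally show ?thesis
    using DERIV_cong[OF deriv] unfolding u_def by blast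
qed

lemma has_real_derivative_powr_jacobiP_minus:
  assumes "x < 1"
  shows "((\<lambda>x. ((1-x)/2) powr a * jacobiP a b (int n) x) has_real_derivative
     - (real n + a) / 2 * ((1-x)/2) powr (a - 1) * jacobiP (a-1) (b+1) (int n) x) (at x)"
proof -
  define w where "w = (1 - x)/2"
  have w0: "w > 0" using assms by (simp add: w_def)
  have deriv: "((\<lambda>x. ((1-x)/2) powr a * jacobiP a b (int n) x) has_real_derivative
     (a * w powr (a - 1) * (- 1/2)) * jacobiP a b (int n) x + (- jacobiP_dw a b n x / 2) * w powr a) (at x)"
    unfolding w_def using assms
    by (intro DERIV_mult DERIV_fun_powr has_real_derivative_jacobiP_of_nat)
       (auto intro!: derivative_eq_intros)
  have "w powr a = w powr (a - 1) * w"
    using w0 powr_add[of w "a - 1" 1] by simp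
  then have "(a * w powr (a - 1) * (- 1/2)) * jacobiP a b (int n) x + (- jacobiP_dw a b n x / 2) * w powr a
     = - (w powr (a - 1) / 2 * (a * jacobiP a b (int n) x + w * jacobiP_dw a b n x))"
    by (simp add: field_simps)
  also have "\<dots> = - (real n + a) / 2 * w powr (a - 1) * jacobiP (a-1) (b+1) (int n) x"
    unfolding w_def jacobiP_contiguous_alpha by (simp add: algebra_simps)
  finally show ?thesis
    using DERIV_cong[OF deriv] unfolding w_def by blast
qed

lemma funpow_deriv_eqI:
  assumes "open S" and "x \<in> S"
    and "\<And>x. x \<in> S \<Longrightarrow> f x = F 0 x"
    and "\<And>j x. x \<in> S \<Longrightarrow> (F j has_real_derivative F (Suc j) x) (at x)"
  shows "(deriv ^^ j) f x = F j x"
  using assms(2)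
proof (induction j arbitrary: x)
  case 0
  then show ?case using assms(3) by simp
next
  case (Suc j)
  have "((deriv ^^ j) f has_real_derivative F (Suc j) x) (at x)"
    using has_field_derivative_transform_within_open[OF assms(4)[OF Suc.prems] assms(1) Suc.prems]
      Suc.IH by simp
  then show ?case by (simp add: DERIV_imp_deriv)
qed

lemma funpow_deriv_powr_jacobiP_plus:
  assumes "-1 < x"
  shows "(deriv ^^ j) (\<lambda>x. ((1+x)/2) powr b * jacobiP a b (int n) x) x
    = (-1)^j * pochhammer (- real n - b) j / 2^j
        * (((1+x)/2) powr (b - real j) * jacobiP (a + real j) (b - real j) (int n) x)"
proof (rule funpow_deriv_eqI[where S = "{-1<..}"])
  fix j :: nat and x :: real
  assume "x \<in> {-1<..}"
  then have "((\<lambda>x. ((1+x)/2) powr (b - real j) * jacobiP (a + real j) (b - real j) (int n) x)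
      has_real_derivative (real n + b - real j) / 2 * ((1+x)/2) powr (b - real (Suc j))
        * jacobiP (a + real (Suc j)) (b - real (Suc j)) (int n) x) (at x)"
    using has_real_derivative_powr_jacobiP_plus[of x "b - real j" "a + real j" n]
    by (simp add: algebra_simps)
  then show "((\<lambda>x. (-1)^j * pochhammer (- real n - b) j / 2^j
        * (((1+x)/2) powr (b - real j) * jacobiP (a + real j) (b - real j) (int n) x))
      has_real_derivative (-1)^Suc j * pochhammer (- real n - b) (Suc j) / 2^Suc j
        * (((1+x)/2) powr (b - real (Suc j))
        * jacobiP (a + real (Suc j)) (b - real (Suc j)) (int n) x)) (at x)"
    by (rule DERIV_cmult[THEN DERIV_cong]) (simp add: pochhammer_Suc field_simps)
qed (use assms in auto)

lemma funpow_deriv_powr_jacobiP_minus: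
  assumes "x < 1"
  shows "(deriv ^^ j) (\<lambda>x. ((1-x)/2) powr a * jacobiP a b (int n) x) x
    = pochhammer (- real n - a) j / 2^j
        * (((1-x)/2) powr (a - real j) * jacobiP (a - real j) (b + real j) (int n) x)"
proof (rule funpow_deriv_eqI[where S = "{..<1}"])
  fix j :: nat and x :: real
  assume "x \<in> {..<1}"
  then have "((\<lambda>x. ((1-x)/2) powr (a - real j) * jacobiP (a - real j) (b + real j) (int n) x)
      has_real_derivative - (real n + a - real j) / 2 * ((1-x)/2) powr (a - real (Suc j))
        * jacobiP (a - real (Suc j)) (b + real (Suc j)) (int n) x) (at x)"
    using has_real_derivative_powr_jacobiP_minus[of x "a - real j" "b + real j" n]
    by (simp add: algebra_simps)
  then show "((\<lambda>x. pochhammer (- real n - a) j / 2^j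
        * (((1-x)/2) powr (a - real j) * jacobiP (a - real j) (b + real j) (int n) x))
      has_real_derivative pochhammer (- real n - a) (Suc j) / 2^Suc j
        * (((1-x)/2) powr (a - real (Suc j))
        * jacobiP (a - real (Suc j)) (b + real (Suc j)) (int n) x)) (at x)"
    by (rule DERIV_cmult[THEN DERIV_cong]) (simp add: pochhammer_Suc field_simps)
qed (use assms in auto)

lemma funpow_deriv_jacobiP:
  "(deriv ^^ j) (jacobiP a b m) x
    = pochhammer (real_of_int m + a + b + 1) j / 2^j * jacobiP (a + real j) (b + real j) (m - int j) x"
proof (rule funpow_deriv_eqI[where S = UNIV])
  fix j :: nat and x :: real
  have "(jacobiP (a + real j) (b + real j) (m - int j) has_real_derivative
      (real_of_int m + a + b + 1 + real j) / 2
        * jacobiP (a + real (Suc j)) (b + real (Suc j)) (m - int (Suc j)) x) (at x)"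
    using has_real_derivative_jacobiP[of "a + real j" "b + real j" "m - int j" x]
    by (simp add: algebra_simps)
  then show "((\<lambda>x. pochhammer (real_of_int m + a + b + 1) j / 2^j
        * jacobiP (a + real j) (b + real j) (m - int j) x)
      has_real_derivative pochhammer (real_of_int m + a + b + 1) (Suc j) / 2^Suc j
        * jacobiP (a + real (Suc j)) (b + real (Suc j)) (m - int (Suc j)) x) (at x)"
    by (rule DERIV_cmult[THEN DERIV_cong]) (simp add: pochhammer_Suc field_simps)
qed auto

lemma powr_split_power:
  assumes "(u::real) > 0" and "j < N"
  shows "u powr (c - real j) = u powr (c + 1 - real N) * u ^ (N - Suc j)"
proof -
  have "real (N - Suc j) = real N - 1 - real j" using assms(2) by (simp add: of_nat_diff)
  then show ?thesis
    using assms(1) by (simp add: powr_realpow[symmetric] powr_add[symmetric])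
qed

text \<open>The power of \<open>(1 \<plusminus> x)/2\<close> that is pulled out of the column of a seed in an
  \<open>N \<times> N\<close> Wronskian.\<close>
definition seed_scale :: "real \<Rightarrow> real \<Rightarrow> nat \<Rightarrow> real \<Rightarrow> nat \<times> seed_type \<Rightarrow> real" where
  "seed_scale g h N x l = (case snd l of
      TypeI \<Rightarrow> ((1+x)/2) powr (3/2 - h - real N)
    | TypeII \<Rightarrow> ((1-x)/2) powr (3/2 - g - real N))"

lemma funpow_deriv_mu:
  assumes "-1 < x" and "x < 1" and "j < N"
  shows "(deriv ^^ j) (mu g h l) x = seed_scale g h N x l * Xent g h N l (Suc j) x"
proof -
  obtain v t where l: "l = (v, t)" by force
  show ?thesis
  proof (cases t)
    case TypeI
    have "mu g h l = (\<lambda>x. ((1+x)/2) powr (1/2 - h) * jacobiP (g - 1/2) (1/2 - h) (int v) x)"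
      by (rule ext) (simp add: mu_def l TypeI)
    then have "(deriv ^^ j) (mu g h l) x = (-1)^j * pochhammer (- real v - (1/2 - h)) j / 2^j
        * (((1+x)/2) powr (1/2 - h - real j) * jacobiP (g - 1/2 + real j) (1/2 - h - real j) (int v) x)"
      by (simp only: funpow_deriv_powr_jacobiP_plus[OF assms(1)])
    moreover have "((1+x)/2) powr (1/2 - h - real j)
        = ((1+x)/2) powr (3/2 - h - real N) * ((1+x)/2) ^ (N - Suc j)"
      using powr_split_power[of "(1+x)/2" j N "1/2 - h"] assms by simp
    ultimately show ?thesis
      by (simp add: seed_scale_def Xent_def l TypeI algebra_simps)
  next
    case TypeII
    have "mu g h l = (\<lambda>x. ((1-x)/2) powr (1/2 - g) * jacobiP (1/2 - g) (h - 1/2) (int v) x)"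
      by (rule ext) (simp add: mu_def l TypeII)
    then have "(deriv ^^ j) (mu g h l) x = pochhammer (- real v - (1/2 - g)) j / 2^j
        * (((1-x)/2) powr (1/2 - g - real j) * jacobiP (1/2 - g - real j) (h - 1/2 + real j) (int v) x)"
      by (simp only: funpow_deriv_powr_jacobiP_minus[OF assms(2)])
    moreover have "((1-x)/2) powr (1/2 - g - real j)
        = ((1-x)/2) powr (3/2 - g - real N) * ((1-x)/2) ^ (N - Suc j)"
      using powr_split_power[of "(1-x)/2" j N "1/2 - g"] assms by simp
    ultimately show ?thesis
      by (simp add: seed_scale_def Xent_def l TypeII algebra_simps)
  qed
qed

lemma funpow_deriv_Pn: "(deriv ^^ j) (Pn g h n) x = Zent g h n (Suc j) x"
proof -
  have "Pn g h n = jacobiP (g - 1/2) (h - 1/2) (int n)"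
    by (rule ext) (simp add: Pn_def)
  then show ?thesis
    by (simp add: funpow_deriv_jacobiP Zent_def algebra_simps)
qed

lemma det_mat_mult_cols:
  "det (mat n n (\<lambda>(i, k). c k * f i k)) = (\<Prod>k<n. c k) * det (mat n n (\<lambda>(i, k). f i k))"
proof -
  have "det (mat n n (\<lambda>(i, k). c k * f i k))
      = (\<Sum>p | p permutes {0..<n}. signof p * (\<Prod>j<n. c j * f (p j) j))"
    by (subst det_col[of _ n]) (auto intro!: sum.cong prod.cong)
  also have "\<dots> = (\<Prod>k<n. c k) * (\<Sum>p | p permutes {0..<n}. signof p * (\<Prod>j<n. f (p j) j))"
    by (simp add: sum_distrib_left prod.distrib mult_ac)
  also have "(\<Sum>p | p permutes {0..<n}. signof p * (\<Prod>j<n. f (p j) j))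
      = det (mat n n (\<lambda>(i, k). f i k))"
    by (subst det_col[of _ n]) (auto intro!: sum.cong prod.cong)
  finally show ?thesis .
qed

lemma wronskian_eq_prod_mult_det:
  assumes "\<And>j k. j < length fs \<Longrightarrow> k < length fs \<Longrightarrow>
    (deriv ^^ j) (fs ! k) x = c k * e j k"
  shows "wronskian fs x
    = (\<Prod>k<length fs. c k) * det (mat (length fs) (length fs) (\<lambda>(j, k). e j k))"
proof -
  have "mat (length fs) (length fs) (\<lambda>(j, k). (deriv ^^ j) (fs ! k) x)
      = mat (length fs) (length fs) (\<lambda>(j, k). c k * e j k)"
    by (rule eq_matI) (simp_all add: assms)
  then show ?thesis
    unfolding wronskian_def by (simp add: det_mat_mult_cols)
qed

lemma prod_seed_scale:
  assumes "-1 < x" and "x < 1"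
  shows "(\<Prod>k<length D. seed_scale g h N x (D ! k))
    = ((1+x)/2) powr ((3/2 - h - real N) * real (numI D))
    * ((1-x)/2) powr ((3/2 - g - real N) * real (numII D))"
proof (induction D)
  case (Cons l D)
  have "(\<Prod>k<length (l # D). seed_scale g h N x ((l # D) ! k))
      = seed_scale g h N x l * (\<Prod>k<length D. seed_scale g h N x (D ! k))"
    unfolding length_Cons prod.lessThan_Suc_shift by simp
  with Cons.IH assms show ?case
    by (cases "snd l") (simp_all add: seed_scale_def numI_def numII_def distrib_left powr_add)
qed (use assms in \<open>simp add: numI_def numII_def\<close>)

lemma length_eq_numI_add_numII: "length D = numI D + numII D"
proof -
  have "filter (\<lambda>l. snd l = TypeII) D = filter (\<lambda>l. \<not> snd l = TypeI) D"
    by (rule filter_cong[OF refl]) (metis seed_type.exhaust seed_type.distinct(1))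
  then show ?thesis
    using sum_length_filter_compl[of "\<lambda>l. snd l = TypeI" D] by (simp add: numI_def numII_def)
qed

lemma Xi_eq_det:
  assumes "-1 < x" and "x < 1"
  shows "Xi g h D x
    = ((1+x)/2) powr (- (real (numI D) * (real (numI D) - 1)))
    * ((1-x)/2) powr (- (real (numII D) * (real (numII D) - 1)))
    * det (mat (length D) (length D) (\<lambda>(i, k). Xent g h (length D) (D ! k) (i + 1) x))"
proof -
  define N where "N = length D"
  define I where "I = real (numI D)"
  define II where "II = real (numII D)"
  have N: "real N = I + II"
    unfolding N_def I_def II_def by (subst length_eq_numI_add_numII) simp
  have exponents: "(3/2 - h - real N) * I + (II + h - 1/2) * I = - (I * (I - 1))"
    "(3/2 - g - real N) * II + (I + g - 1/2) * II = - (II * (II - 1))"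
    unfolding N by (simp_all add: algebra_simps)
  have "wronskian (map (mu g h) D) x
      = (\<Prod>k<N. seed_scale g h N x (D ! k))
      * det (mat N N (\<lambda>(j, k). Xent g h N (D ! k) (j + 1) x))"
    using wronskian_eq_prod_mult_det[of "map (mu g h) D" x "\<lambda>k. seed_scale g h N x (D ! k)"]
      funpow_deriv_mu[OF assms] by (simp add: N_def)
  then have "Xi g h D x
      = (((1+x)/2) powr ((3/2 - h - real N) * I) * ((1+x)/2) powr ((II + h - 1/2) * I))
      * (((1-x)/2) powr ((3/2 - g - real N) * II) * ((1-x)/2) powr ((I + g - 1/2) * II))
      * det (mat N N (\<lambda>(j, k). Xent g h N (D ! k) (j + 1) x))"
    unfolding Xi_def prod_seed_scale[OF assms] I_def II_def N_def by (simp only: mult_ac)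
  also have "\<dots> = ((1+x)/2) powr (- (I * (I - 1))) * ((1-x)/2) powr (- (II * (II - 1)))
      * det (mat N N (\<lambda>(j, k). Xent g h N (D ! k) (j + 1) x))"
    by (simp only: powr_add[symmetric] exponents)
  finally show ?thesis unfolding N_def I_def II_def .
qed

lemma PD_eq_det:
  assumes "-1 < x" and "x < 1"
  shows "PD g h D n x
    = ((1+x)/2) powr (- (real (numI D) * (real (numI D) - 1)))
    * ((1-x)/2) powr (- (real (numII D) * (real (numII D) - 1)))
    * det (mat (length D + 1) (length D + 1) (\<lambda>(i, k).
        if k < length D then Xent g h (length D + 1) (D ! k) (i + 1) x else Zent g h n (i + 1) x))"
proof -
  define N where "N = length D"
  define I where "I = real (numI D)"
  define II where "II = real (numII D)"
  have N: "real N = I + II"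
    unfolding N_def I_def II_def by (subst length_eq_numI_add_numII) simp
  have exponents: "(3/2 - h - real (N + 1)) * I + (II + h + 1/2) * I = - (I * (I - 1))"
    "(3/2 - g - real (N + 1)) * II + (I + g + 1/2) * II = - (II * (II - 1))"
    unfolding of_nat_add N by (simp_all add: algebra_simps)
  have "wronskian (map (mu g h) D @ [Pn g h n]) x
      = (\<Prod>k<N + 1. if k < N then seed_scale g h (N + 1) x (D ! k) else 1)
      * det (mat (N + 1) (N + 1) (\<lambda>(j, k).
          if k < N then Xent g h (N + 1) (D ! k) (j + 1) x else Zent g h n (j + 1) x))"
    using wronskian_eq_prod_mult_det[of "map (mu g h) D @ [Pn g h n]" x
        "\<lambda>k. if k < N then seed_scale g h (N + 1) x (D ! k) else 1"]
      funpow_deriv_mu[OF assms] funpow_deriv_Pn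
    by (simp add: N_def nth_append)
  moreover have "(\<Prod>k<N + 1. if k < N then seed_scale g h (N + 1) x (D ! k) else 1)
      = (\<Prod>k<N. seed_scale g h (N + 1) x (D ! k))"
    by simp
  ultimately have "PD g h D n x
      = (((1+x)/2) powr ((3/2 - h - real (N + 1)) * I) * ((1+x)/2) powr ((II + h + 1/2) * I))
      * (((1-x)/2) powr ((3/2 - g - real (N + 1)) * II) * ((1-x)/2) powr ((I + g + 1/2) * II))
      * det (mat (N + 1) (N + 1) (\<lambda>(j, k).
          if k < N then Xent g h (N + 1) (D ! k) (j + 1) x else Zent g h n (j + 1) x))"
    unfolding PD_def prod_seed_scale[OF assms] I_def II_def N_def by (simp only: mult_ac)
  also have "\<dots> = ((1+x)/2) powr (- (I * (I - 1))) * ((1-x)/2) powr (- (II * (II - 1)))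
      * det (mat (N + 1) (N + 1) (\<lambda>(j, k).
          if k < N then Xent g h (N + 1) (D ! k) (j + 1) x else Zent g h n (j + 1) x))"
    by (simp only: powr_add[symmetric] exponents)
  finally show ?thesis unfolding N_def I_def II_def .
qed

theorem mainTheorem2:
  fixes g h :: real and D :: "(nat \<times> seed_type) list" and MI MII n :: nat and \<eta> :: real
  assumes "g > 1/2" and "h > 1/2"
    and "distinct D" and "\<forall>l \<in> set D. seed_label g h l"
    and "MI = length (filter (\<lambda>l. snd l = TypeI) D)"
    and "MII = length (filter (\<lambda>l. snd l = TypeII) D)"
    and "-1 < \<eta>" and "\<eta> < 1"
  shows "(Xi g h D \<eta> =
           ((1 + \<eta>) / 2) powr (- (real MI * (real MI - 1)))
         * ((1 - \<eta>) / 2) powr (- (real MII * (real MII - 1)))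
         * det (mat (MI + MII) (MI + MII)
                 (\<lambda>(i, k). Xent g h (MI + MII) (D ! k) (i + 1) \<eta>))) \<and>
         (PD g h D n \<eta> =
           ((1 + \<eta>) / 2) powr (- (real MI * (real MI - 1)))
         * ((1 - \<eta>) / 2) powr (- (real MII * (real MII - 1)))
         * det (mat (MI + MII + 1) (MI + MII + 1)
                 (\<lambda>(i, k). if k < MI + MII then Xent g h (MI + MII + 1) (D ! k) (i + 1) \<eta>
                            else Zent g h n (i + 1) \<eta>)))"
proof -
  have counts: "numI D = MI" "numII D = MII" "length D = MI + MII"
    using assms(5,6) length_eq_numI_add_numII[of D] by (simp_all add: numI_def numII_def)
  show ?thesis
    using Xi_eq_det[OF assms(7,8), of g h D] PD_eq_det[OF assms(7,8), of g h D n]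
    unfolding counts by blast
qed

end
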